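(* Let $A=H+S\in\mathbb{C}^{n,n}$ with $H=H^*\neq 0$ positive semidefinite and $S=-S^*\neq 0$. Let $U\in\mathbb{C}^{n,n}$ be unitary, $r\geq 2$, and $n_1\geq\cdots\geq n_{r-1}>0$, $n_r\geq 0$ with $\sum n_i=n$, such that $U^*HU=\mathrm{diag}(H_{11},0)$ with $H_{11}=H_{11}^*\in\mathbb{C}^{n_1,n_1}$ positive definite, and $U^*SU=[S_{ij}]_{i,j=1}^r$ (blocks $S_{ij}\in\mathbb{C}^{n_i,n_j}$) with $S_{ij}=0$ for $|i-j|>1$, $S_{i,r}=S_{r,i}=0$ for $i<r$, $S_{ii}=-S_{ii}^*$, and $S_{i,i-1}=-S_{i-1,i}^*=[\Sigma_{i,i-1}\;\,0]$ with $\Sigma_{i,i-1}\in\mathbb{C}^{n_i,n_i}$ nonsingular for $i=2,\dots,r-1$. Set $\widehat{A}_{11}=H_{11}+S_{11}$ and $\mathcal{S}_0:=\widehat{A}_{11}$, and define recursively $\mathcal{S}_k=S_{k+1,k+1}-S_{k+1,k}\,\mathcal{S}_{k-1}^{-1}\,S_{k,k+1}$ for $k=1,\dots,r-2$. Then all these inverses exist, $\widehat{A}_{11}$ and the Schur complements $\mathcal{S}_1,\dots,\mathcal{S}_{r-2}$ are positive definite, and $U^*AU$ is transformed via this block Gaussian elimination (Schur complement reduction), i.e. $U^*AU=L\,D\,W$ with $L$ block unit lower triangular and $W$ block unit upper triangular, into the block diagonal form $$D=\mathrm{diag}\big(\widehat{A}_{11},\mathcal{S}_1,\dots,\mathcal{S}_{r-2},S_{r,r}\big),$$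 where the skew-Hermitian block $S_{r,r}$ is absent if $n_r=0$.
   Context: A (not necessarily Hermitian) matrix $M\in\mathbb{C}^{m,m}$ is called positive definite (resp. positive semidefinite) if its Hermitian part $\frac12(M+M^* )$ is positive definite (resp. positive semidefinite). $M^*$ denotes the conjugate transpose. *)

theory Defs
  imports "Jordan_Normal_Form.Matrix"
begin

definition adj :: "complex mat \<Rightarrow> complex mat" where
  "adj M = transpose_mat (map_mat cnj M)"

definition qform :: "complex mat \<Rightarrow> complex vec \<Rightarrow> complex" where
  "qform M x = conjugate x \<bullet> (M *\<^sub>v x)"

definition hermitian :: "complex mat \<Rightarrow> bool" where
  "hermitian M \<longleftrightarrow> adj M = M"

definition skew_hermitian :: "complex mat \<Rightarrow> bool" where
  "skew_hermitian M \<longleftrightarrow> adj M = - M"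

definition herm_pd :: "nat \<Rightarrow> complex mat \<Rightarrow> bool" where
  "herm_pd m K \<longleftrightarrow> K \<in> carrier_mat m m \<and> hermitian K \<and>
     (\<forall>x\<in>carrier_vec m. x \<noteq> 0\<^sub>v m \<longrightarrow> 0 < Re (qform K x))"

definition herm_psd :: "nat \<Rightarrow> complex mat \<Rightarrow> bool" where
  "herm_psd m K \<longleftrightarrow> K \<in> carrier_mat m m \<and> hermitian K \<and>
     (\<forall>x\<in>carrier_vec m. 0 \<le> Re (qform K x))"

text \<open>Hermitian part; a (not necessarily Hermitian) matrix is positive (semi)definite
  iff its Hermitian part is.\<close>
definition herm_part :: "complex mat \<Rightarrow> complex mat" where
  "herm_part M = (1/2 :: complex) \<cdot>\<^sub>m (M + adj M)"

definition pos_def :: "nat \<Rightarrow> complex mat \<Rightarrow> bool" where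
  "pos_def m M \<longleftrightarrow> M \<in> carrier_mat m m \<and> herm_pd m (herm_part M)"

definition pos_semidef :: "nat \<Rightarrow> complex mat \<Rightarrow> bool" where
  "pos_semidef m M \<longleftrightarrow> M \<in> carrier_mat m m \<and> herm_psd m (herm_part M)"

definition unitary :: "nat \<Rightarrow> complex mat \<Rightarrow> bool" where
  "unitary m U \<longleftrightarrow> U \<in> carrier_mat m m \<and> adj U * U = 1\<^sub>m m \<and> U * adj U = 1\<^sub>m m"

text \<open>Matrix inverse (meaningful when the matrix is invertible).\<close>
definition minv :: "complex mat \<Rightarrow> complex mat" where
  "minv M = (SOME B. inverts_mat M B \<and> inverts_mat B M)"

text \<open>Block partition with block sizes ns 1, ..., ns r (1-based, as in the paper).
  Block i occupies the rows/columns off ns i ..< off ns i + ns i.\<close>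
definition off :: "(nat \<Rightarrow> nat) \<Rightarrow> nat \<Rightarrow> nat" where
  "off ns i = (\<Sum>j\<in>{1..<i}. ns j)"

definition blk :: "(nat \<Rightarrow> nat) \<Rightarrow> complex mat \<Rightarrow> nat \<Rightarrow> nat \<Rightarrow> complex mat" where
  "blk ns M i j = mat (ns i) (ns j) (\<lambda>(a,b). M $$ (off ns i + a, off ns j + b))"

text \<open>Schur complements: schur 0 = H11 + S11, and
  schur k = S_{k+1,k+1} - S_{k+1,k} (schur (k-1))^{-1} S_{k,k+1}
  where Ht = U^* H U and St = U^* S U.\<close>
primrec schur :: "(nat \<Rightarrow> nat) \<Rightarrow> complex mat \<Rightarrow> complex mat \<Rightarrow> nat \<Rightarrow> complex mat" where
  "schur ns Ht St 0 = blk ns Ht 1 1 + blk ns St 1 1"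
| "schur ns Ht St (Suc k) = blk ns St (k+2) (k+2)
     - blk ns St (k+2) (k+1) * minv (schur ns Ht St k) * blk ns St (k+1) (k+2)"

end

theory Submission
  imports Defs "Jordan_Normal_Form.Determinant"
begin

(* Write S_ij for the blocks of U^* S U. The first pivot H11 + S11 is positive definite
   because H11 is and the skew-Hermitian S11 does not change the real part of the quadratic
   form. Since S_{k+1,k} = -S_{k,k+1}^*, the next pivot is S_{k+1,k+1} + B Y B^* with
   B = S_{k+1,k} = [Sigma 0] and Y the inverse of the previous pivot: Y is positive definite
   and B^* is injective because Sigma is nonsingular, so B Y B^* is positive definite, and
   adding the skew-Hermitian S_{k+1,k+1} keeps it so. Positive definite pivots are
   nonsingular, so block Gaussian elimination runs through the block tridiagonal matrix
   U^* A U; since the last block is decoupled from the others, its pivot is S_rr itself. *)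

section \<open>Conjugate transpose and quadratic forms\<close>

lemma adj_carrier[simp]: "A \<in> carrier_mat m k \<Longrightarrow> adj A \<in> carrier_mat k m"
  unfolding adj_def by auto

lemma adj_dims[simp]: "dim_row (adj A) = dim_col A" "dim_col (adj A) = dim_row A"
  unfolding adj_def by auto

lemma adj_index[simp]: "i < dim_col A \<Longrightarrow> j < dim_row A \<Longrightarrow> adj A $$ (i, j) = cnj (A $$ (j, i))"
  unfolding adj_def by auto

lemma adj_mult_vec_carrier[simp]: "B \<in> carrier_mat m k \<Longrightarrow> adj B *\<^sub>v x \<in> carrier_vec k"
  unfolding carrier_vec_def by auto

lemma adj_adj[simp]: "adj (adj A) = A"
  by (rule eq_matI) auto

lemma adj_uminus: "adj (- A) = - adj A"
  by (rule eq_matI) auto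

lemma adj_add: "A \<in> carrier_mat m k \<Longrightarrow> B \<in> carrier_mat m k \<Longrightarrow> adj (A + B) = adj A + adj B"
  by (rule eq_matI) auto

lemma adj_smult: "adj (c \<cdot>\<^sub>m A) = cnj c \<cdot>\<^sub>m adj A"
  by (rule eq_matI) auto

lemma sprod_adj:
  assumes "B \<in> carrier_mat m k" "x \<in> carrier_vec m" "y \<in> carrier_vec k"
  shows "conjugate x \<bullet> (B *\<^sub>v y) = conjugate (adj B *\<^sub>v x) \<bullet> y"
proof -
  have "conjugate x \<bullet> (B *\<^sub>v y) = (\<Sum>i<m. \<Sum>j<k. cnj (x $ i) * B $$ (i, j) * y $ j)"
    using assms by (auto simp: scalar_prod_def row_def lessThan_atLeast0 sum_distrib_left
        mult.assoc intro!: sum.cong)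
  also have "\<dots> = (\<Sum>j<k. \<Sum>i<m. cnj (x $ i) * B $$ (i, j) * y $ j)"
    by (rule sum.swap)
  also have "\<dots> = conjugate (adj B *\<^sub>v x) \<bullet> y"
    using assms by (auto simp: scalar_prod_def row_def lessThan_atLeast0 sum_distrib_left
        sum_distrib_right mult.commute intro!: sum.cong)
  finally show ?thesis .
qed

lemma cnj_sprod_conjugate:
  assumes "x \<in> carrier_vec m" "y \<in> carrier_vec m"
  shows "cnj (conjugate x \<bullet> y) = conjugate y \<bullet> x"
  using assms by (auto simp: scalar_prod_def mult.commute intro!: sum.cong)

lemma qform_adj:
  assumes "A \<in> carrier_mat m m" "x \<in> carrier_vec m"
  shows "qform (adj A) x = cnj (qform A x)"
proof -
  have "qform (adj A) x = conjugate (A *\<^sub>v x) \<bullet> x"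
    unfolding qform_def using sprod_adj[of "adj A" m m x x] assms by simp
  also have "\<dots> = cnj (qform A x)"
    unfolding qform_def using assms by (simp add: cnj_sprod_conjugate[of _ m])
  finally show ?thesis .
qed

lemma qform_add:
  assumes "A \<in> carrier_mat m m" "B \<in> carrier_mat m m" "x \<in> carrier_vec m"
  shows "qform (A + B) x = qform A x + qform B x"
  unfolding qform_def using assms
  by (simp add: add_mult_distrib_mat_vec scalar_prod_add_distrib[of _ m])

lemma qform_smult:
  assumes "A \<in> carrier_mat m m" "x \<in> carrier_vec m"
  shows "qform (c \<cdot>\<^sub>m A) x = c * qform A x"
  unfolding qform_def using assms
  by (auto simp: scalar_prod_def sum_distrib_left ac_simps intro!: sum.cong)

lemma qform_congruence:
  assumes B: "B \<in> carrier_mat m k" and Y: "Y \<in> carrier_mat k k" and x: "x \<in> carrier_vec m"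
  shows "qform (B * Y * adj B) x = qform Y (adj B *\<^sub>v x)"
proof -
  have "(B * Y * adj B) *\<^sub>v x = (B * Y) *\<^sub>v (adj B *\<^sub>v x)"
    using assms by (intro assoc_mult_mat_vec[of _ m k]) auto
  also have "\<dots> = B *\<^sub>v (Y *\<^sub>v (adj B *\<^sub>v x))"
    using assms by (intro assoc_mult_mat_vec[of _ m k]) auto
  finally have "(B * Y * adj B) *\<^sub>v x = B *\<^sub>v (Y *\<^sub>v (adj B *\<^sub>v x))" .
  then show ?thesis
    unfolding qform_def using sprod_adj[OF B x, of "Y *\<^sub>v (adj B *\<^sub>v x)"] assms by simp
qed

lemma skew_hermitian_Re_qform:
  assumes "A \<in> carrier_mat m m" "skew_hermitian A" "x \<in> carrier_vec m"
  shows "Re (qform A x) = 0"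
proof -
  have "cnj (qform A x) = - qform A x"
    using qform_adj[OF assms(1,3)] assms unfolding skew_hermitian_def qform_def by simp
  then have "Re (cnj (qform A x)) = Re (- qform A x)" by simp
  then show ?thesis by simp
qed

section \<open>Positive definite matrices\<close>

lemma pos_def_iff_Re_qform: "pos_def m A \<longleftrightarrow> A \<in> carrier_mat m m \<and>
    (\<forall>x\<in>carrier_vec m. x \<noteq> 0\<^sub>v m \<longrightarrow> 0 < Re (qform A x))"
proof -
  have "hermitian (herm_part A)" if "A \<in> carrier_mat m m"
    using that unfolding hermitian_def herm_part_def
    by (simp add: adj_smult adj_add[of _ m m] comm_add_mat[of _ m m])
  moreover have "Re (qform (herm_part A) x) = Re (qform A x)"
    if "A \<in> carrier_mat m m" "x \<in> carrier_vec m" for x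
    unfolding herm_part_def using that by (simp add: qform_smult[of _ m] qform_add[of _ m] qform_adj)
  ultimately show ?thesis
    unfolding pos_def_def herm_pd_def by (auto simp: herm_part_def)
qed

lemma herm_pd_imp_pos_def: "herm_pd m K \<Longrightarrow> pos_def m K"
  unfolding herm_pd_def pos_def_iff_Re_qform by simp

lemma pos_def_add_skew_hermitian:
  assumes "pos_def m P" "K \<in> carrier_mat m m" "skew_hermitian K"
  shows "pos_def m (P + K)"
  using assms unfolding pos_def_iff_Re_qform
  by (simp add: qform_add[of _ m] skew_hermitian_Re_qform[of _ m])

lemma pos_def_congruence:
  assumes Y: "pos_def k Y" and B: "B \<in> carrier_mat m k"
    and inj: "\<And>x. x \<in> carrier_vec m \<Longrightarrow> adj B *\<^sub>v x = 0\<^sub>v k \<Longrightarrow> x = 0\<^sub>v m"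
  shows "pos_def m (B * Y * adj B)"
  unfolding pos_def_iff_Re_qform
proof (intro conjI ballI impI)
  show "B * Y * adj B \<in> carrier_mat m m"
    using Y B unfolding pos_def_def by auto
  fix x :: "complex vec" assume x: "x \<in> carrier_vec m" "x \<noteq> 0\<^sub>v m"
  then have "adj B *\<^sub>v x \<noteq> 0\<^sub>v k" using inj by blast
  then show "0 < Re (qform (B * Y * adj B) x)"
    using Y B x unfolding pos_def_iff_Re_qform by (simp add: qform_congruence)
qed

lemma invertible_minv:
  assumes "invertible_mat X" "X \<in> carrier_mat m m"
  shows "minv X \<in> carrier_mat m m" "X * minv X = 1\<^sub>m m" "minv X * X = 1\<^sub>m m"
proof -
  have "inverts_mat X (minv X) \<and> inverts_mat (minv X) X"
    unfolding minv_def by (rule someI_ex) (use assms(1) in \<open>auto simp: invertible_mat_def\<close>)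
  then have XB: "X * minv X = 1\<^sub>m m" and BX: "minv X * X = 1\<^sub>m (dim_row (minv X))"
    using assms(2) by (auto simp: inverts_mat_def)
  have "dim_col (minv X) = m" using arg_cong[OF XB, of dim_col] by simp
  moreover have "dim_row (minv X) = m" using arg_cong[OF BX, of dim_col] assms(2) by simp
  ultimately show "minv X \<in> carrier_mat m m" by auto
  show "X * minv X = 1\<^sub>m m" "minv X * X = 1\<^sub>m m" using XB BX \<open>dim_row (minv X) = m\<close> by auto
qed

lemma pos_def_invertible:
  assumes "pos_def m X" shows "invertible_mat X"
proof -
  have X: "X \<in> carrier_mat m m" using assms unfolding pos_def_def by simp
  have "det X \<noteq> 0"
  proof
    assume "det X = 0"
    then obtain v where "v \<in> carrier_vec m" "v \<noteq> 0\<^sub>v m" "X *\<^sub>v v = 0\<^sub>v m"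
      using det_0_iff_vec_prod_zero[OF X] by auto
    then show False using assms unfolding pos_def_iff_Re_qform qform_def by force
  qed
  then obtain B where "B \<in> carrier_mat m m" "X * B = 1\<^sub>m m" "B * X = 1\<^sub>m m"
    using det_non_zero_imp_unit[OF X, of undefined] unfolding Units_def ring_mat_def by auto
  then show ?thesis
    using X unfolding invertible_mat_def inverts_mat_def by (metis carrier_matD square_mat.simps)
qed

lemma pos_def_minv:
  assumes "pos_def m X" shows "pos_def m (minv X)"
  unfolding pos_def_iff_Re_qform
proof (intro conjI ballI impI)
  have X: "X \<in> carrier_mat m m" using assms unfolding pos_def_def by simp
  note inv = invertible_minv[OF pos_def_invertible[OF assms] X]
  show "minv X \<in> carrier_mat m m" by (rule inv(1))
  fix x :: "complex vec" assume x: "x \<in> carrier_vec m" "x \<noteq> 0\<^sub>v m"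
  define y where "y = minv X *\<^sub>v x"
  have y: "y \<in> carrier_vec m" unfolding y_def using inv(1) x(1) by simp
  have xy: "x = X *\<^sub>v y"
    unfolding y_def using inv x X by (simp add: assoc_mult_mat_vec[symmetric, of _ m m])
  then have "y \<noteq> 0\<^sub>v m" using x X by auto
  then have "0 < Re (qform X y)" using assms y unfolding pos_def_iff_Re_qform by simp
  moreover have "qform (minv X) x = cnj (qform X y)"
    unfolding qform_def y_def[symmetric] using X y xy by (simp add: cnj_sprod_conjugate[of _ m])
  ultimately show "0 < Re (qform (minv X) x)" by simp
qed

lemma invertible_adj_kernel:
  assumes "invertible_mat Sig" "Sig \<in> carrier_mat m m" "x \<in> carrier_vec m"
    and "adj Sig *\<^sub>v x = 0\<^sub>v m"
  shows "x = 0\<^sub>v m"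
proof -
  note inv = invertible_minv[OF assms(1,2)]
  have "x \<bullet>c x = conjugate x \<bullet> (Sig *\<^sub>v (minv Sig *\<^sub>v x))"
    using assms inv by (simp add: assoc_mult_mat_vec[symmetric, of _ m m] conjugate_vec_sprod_comm)
  also have "\<dots> = 0"
    using assms inv by (simp add: sprod_adj[of _ m m])
  finally show ?thesis using assms(3) by simp
qed

lemma padded_adj_kernel:
  assumes "invertible_mat Sig" "Sig \<in> carrier_mat m m" "m \<le> k" "x \<in> carrier_vec m"
    and "adj (mat m k (\<lambda>(a, b). if b < m then Sig $$ (a, b) else 0)) *\<^sub>v x = 0\<^sub>v k"
  shows "x = 0\<^sub>v m"
proof (rule invertible_adj_kernel[OF assms(1,2,4)])
  show "adj Sig *\<^sub>v x = 0\<^sub>v m"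
  proof (rule eq_vecI)
    fix b assume b: "b < dim_vec (0\<^sub>v m :: complex vec)"
    let ?B = "mat m k (\<lambda>(a, b). if b < m then Sig $$ (a, b) else 0)"
    have "(adj Sig *\<^sub>v x) $ b = (adj ?B *\<^sub>v x) $ b"
      using b assms(2-4) by (auto simp: scalar_prod_def row_def intro!: sum.cong)
    then show "(adj Sig *\<^sub>v x) $ b = 0\<^sub>v m $ b"
      using b assms(3,5) by simp
  qed (use assms(2) in auto)
qed

section \<open>Block partitions\<close>

lemma blk_dims[simp]: "dim_row (blk ns M i j) = ns i" "dim_col (blk ns M i j) = ns j"
  unfolding blk_def by auto

lemma blk_carrier[simp]: "blk ns M i j \<in> carrier_mat (ns i) (ns j)"
  by auto

lemma off_Suc: "1 \<le> i \<Longrightarrow> off ns (Suc i) = off ns i + ns i"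
  unfolding off_def by (simp add: atLeastLessThanSuc add.commute)

lemma off_1[simp]: "off ns 1 = 0" "off ns (Suc 0) = 0"
  unfolding off_def by auto

lemma off_mono: "i \<le> j \<Longrightarrow> off ns i \<le> off ns j"
  unfolding off_def by (rule sum_mono2) auto

lemma off_block_less: "1 \<le> i \<Longrightarrow> i \<le> r \<Longrightarrow> a < ns i \<Longrightarrow> off ns i + a < off ns (Suc r)"
  using off_Suc[of i ns] off_mono[of "Suc i" "Suc r" ns] by simp

lemma sum_lessThan_off:
  "(\<Sum>s<off ns (Suc m). g s) = (\<Sum>t\<in>{1..m}. \<Sum>a<ns t. g (off ns t + a))"
proof (induction m)
  case (Suc m)
  have "(\<Sum>s<x + y. g s) = (\<Sum>s<x. g s) + (\<Sum>a<y. g (x + a))" for x y :: nat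
    by (induction y) (auto simp: add.assoc)
  then show ?case using Suc off_Suc[of "Suc m" ns] by simp
qed simp

definition block_index :: "(nat \<Rightarrow> nat) \<Rightarrow> nat \<Rightarrow> nat" where
  "block_index ns p = (LEAST i. p < off ns (Suc i))"

lemma block_index_bounds:
  assumes "p < off ns (Suc r)"
  shows "1 \<le> block_index ns p" "block_index ns p \<le> r"
    "off ns (block_index ns p) \<le> p" "p < off ns (block_index ns p) + ns (block_index ns p)"
proof -
  let ?i = "block_index ns p"
  have less: "p < off ns (Suc ?i)" unfolding block_index_def by (rule LeastI[of _ r]) (rule assms)
  show "?i \<le> r" unfolding block_index_def by (rule Least_le) (rule assms)
  show i: "1 \<le> ?i" using less by (cases ?i) auto
  have "\<not> p < off ns (Suc (?i - 1))" unfolding block_index_def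
    by (rule not_less_Least) (use i in \<open>auto simp: block_index_def\<close>)
  then show "off ns ?i \<le> p" using i by simp
  show "p < off ns ?i + ns ?i" using less off_Suc[OF i] by simp
qed

lemma block_index_off: "1 \<le> i \<Longrightarrow> a < ns i \<Longrightarrow> block_index ns (off ns i + a) = i"
  unfolding block_index_def
proof (rule Least_equality)
  assume "1 \<le> i" "a < ns i"
  then show "off ns i + a < off ns (Suc i)" using off_Suc[of i ns] by simp
  fix j assume "off ns i + a < off ns (Suc j)"
  then show "i \<le> j" using off_mono[of "Suc j" i ns] by (cases "i \<le> j") auto
qed

definition mat_of_blocks :: "(nat \<Rightarrow> nat) \<Rightarrow> nat \<Rightarrow> (nat \<Rightarrow> nat \<Rightarrow> 'a mat) \<Rightarrow> 'a mat" where
  "mat_of_blocks ns r F = mat (off ns (Suc r)) (off ns (Suc r))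
     (\<lambda>(p, q). F (block_index ns p) (block_index ns q)
                  $$ (p - off ns (block_index ns p), q - off ns (block_index ns q)))"

lemma mat_of_blocks_dims[simp]:
  "dim_row (mat_of_blocks ns r F) = off ns (Suc r)" "dim_col (mat_of_blocks ns r F) = off ns (Suc r)"
  unfolding mat_of_blocks_def by auto

lemma mat_of_blocks_carrier[simp]: "mat_of_blocks ns r F \<in> carrier_mat (off ns (Suc r)) (off ns (Suc r))"
  by auto

lemma blk_mat_of_blocks:
  assumes "i \<in> {1..r}" "j \<in> {1..r}" "F i j \<in> carrier_mat (ns i) (ns j)"
  shows "blk ns (mat_of_blocks ns r F) i j = F i j"
  using assms off_block_less[of i r] off_block_less[of j r]
  by (intro eq_matI) (auto simp: blk_def mat_of_blocks_def block_index_off)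

lemma mat_of_blocks_blk:
  assumes "M \<in> carrier_mat (off ns (Suc r)) (off ns (Suc r))"
  shows "mat_of_blocks ns r (blk ns M) = M"
proof (rule eq_matI)
  fix p q assume "p < dim_row M" "q < dim_col M"
  then have p: "p < off ns (Suc r)" and q: "q < off ns (Suc r)" using assms by auto
  show "mat_of_blocks ns r (blk ns M) $$ (p, q) = M $$ (p, q)"
    using block_index_bounds[OF p] block_index_bounds[OF q] p q
    by (simp add: mat_of_blocks_def blk_def)
qed (use assms in auto)

lemma blk_add:
  assumes "A \<in> carrier_mat (off ns (Suc r)) (off ns (Suc r))"
    "B \<in> carrier_mat (off ns (Suc r)) (off ns (Suc r))" "i \<in> {1..r}" "j \<in> {1..r}"
  shows "blk ns (A + B) i j = blk ns A i j + blk ns B i j"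
  using assms off_block_less[of i r] off_block_less[of j r]
  by (intro eq_matI) (auto simp: blk_def)

lemma mat_of_blocks_mult:
  fixes F G K :: "nat \<Rightarrow> nat \<Rightarrow> 'a :: comm_semiring_0 mat"
  assumes F: "\<And>i j. i \<in> {1..r} \<Longrightarrow> j \<in> {1..r} \<Longrightarrow> F i j \<in> carrier_mat (ns i) (ns j)"
    and G: "\<And>i j. i \<in> {1..r} \<Longrightarrow> j \<in> {1..r} \<Longrightarrow> G i j \<in> carrier_mat (ns i) (ns j)"
    and K: "\<And>i j a b. i \<in> {1..r} \<Longrightarrow> j \<in> {1..r} \<Longrightarrow> a < ns i \<Longrightarrow> b < ns j \<Longrightarrow>
              (\<Sum>t\<in>{1..r}. (F i t * G t j) $$ (a, b)) = K i j $$ (a, b)"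
  shows "mat_of_blocks ns r F * mat_of_blocks ns r G = mat_of_blocks ns r K"
proof (rule eq_matI)
  fix p q assume "p < dim_row (mat_of_blocks ns r K)" "q < dim_col (mat_of_blocks ns r K)"
  then have p: "p < off ns (Suc r)" and q: "q < off ns (Suc r)" by (auto simp: mat_of_blocks_def)
  define i j where "i = block_index ns p" and "j = block_index ns q"
  define a b where "a = p - off ns i" and "b = q - off ns j"
  have i: "i \<in> {1..r}" and j: "j \<in> {1..r}" and a: "a < ns i" and b: "b < ns j"
    using block_index_bounds[OF p] block_index_bounds[OF q] by (auto simp: i_def j_def a_def b_def)
  let ?F = "mat_of_blocks ns r F" and ?G = "mat_of_blocks ns r G"
  have "(?F * ?G) $$ (p, q) = (\<Sum>s<off ns (Suc r). ?F $$ (p, s) * ?G $$ (s, q))"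
    using p q by (auto simp: scalar_prod_def lessThan_atLeast0 intro!: sum.cong)
  also have "\<dots> = (\<Sum>t\<in>{1..r}. \<Sum>c<ns t. ?F $$ (p, off ns t + c) * ?G $$ (off ns t + c, q))"
    by (rule sum_lessThan_off)
  also have "\<dots> = (\<Sum>t\<in>{1..r}. \<Sum>c<ns t. F i t $$ (a, c) * G t j $$ (c, b))"
    using p q off_block_less[of _ r] by (intro sum.cong refl)
      (auto simp: mat_of_blocks_def block_index_off i_def j_def a_def b_def)
  also have "\<dots> = (\<Sum>t\<in>{1..r}. (F i t * G t j) $$ (a, b))"
  proof (intro sum.cong refl)
    fix t assume t: "t \<in> {1..r}"
    show "(\<Sum>c<ns t. F i t $$ (a, c) * G t j $$ (c, b)) = (F i t * G t j) $$ (a, b)"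
      using carrier_matD[OF F[OF i t]] carrier_matD[OF G[OF t j]] a b
      by (auto simp: scalar_prod_def lessThan_atLeast0 intro!: sum.cong)
  qed
  also have "\<dots> = mat_of_blocks ns r K $$ (p, q)"
    using K[OF i j a b] p q by (simp add: mat_of_blocks_def i_def j_def a_def b_def)
  finally show "(?F * ?G) $$ (p, q) = mat_of_blocks ns r K $$ (p, q)" .
qed (auto simp: mat_of_blocks_def)

lemma mat_of_blocks_mult_lower_bidiagonal:
  fixes F G K :: "nat \<Rightarrow> nat \<Rightarrow> 'a :: comm_semiring_0 mat"
  assumes F: "\<And>i j. i \<in> {1..r} \<Longrightarrow> j \<in> {1..r} \<Longrightarrow> F i j \<in> carrier_mat (ns i) (ns j)"
    and G: "\<And>i j. i \<in> {1..r} \<Longrightarrow> j \<in> {1..r} \<Longrightarrow> G i j \<in> carrier_mat (ns i) (ns j)"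
    and lower: "\<And>i t. i \<in> {1..r} \<Longrightarrow> t \<in> {1..r} \<Longrightarrow> t \<noteq> i \<Longrightarrow> Suc t \<noteq> i \<Longrightarrow>
                  F i t = 0\<^sub>m (ns i) (ns t)"
    and K: "\<And>i j. i \<in> {1..r} \<Longrightarrow> j \<in> {1..r} \<Longrightarrow>
              F i i * G i j + (if i = 1 then 0\<^sub>m (ns i) (ns j) else F i (i - 1) * G (i - 1) j) = K i j"
  shows "mat_of_blocks ns r F * mat_of_blocks ns r G = mat_of_blocks ns r K"
proof (rule mat_of_blocks_mult[OF F G])
  fix i j a b assume i: "i \<in> {1..r}" and j: "j \<in> {1..r}" and a: "a < ns i" and b: "b < ns j"
  define f where "f t = (F i t * G t j) $$ (a, b)" for t
  have "(\<Sum>t\<in>{1..r}. f t) = (\<Sum>t\<in>{1..r} \<inter> {i - 1, i}. f t)"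
  proof (intro sum.mono_neutral_right ballI)
    fix t assume "t \<in> {1..r} - {1..r} \<inter> {i - 1, i}"
    then have "t \<in> {1..r}" "F i t = 0\<^sub>m (ns i) (ns t)" using lower[OF i] by auto
    then show "f t = 0" unfolding f_def using G[of t j] j a b by auto
  qed auto
  also have "\<dots> = (F i i * G i j + (if i = 1 then 0\<^sub>m (ns i) (ns j) else F i (i - 1) * G (i - 1) j))
                    $$ (a, b)"
  proof (cases "i = 1")
    case True
    then have "{1..r} \<inter> {i - 1, i} = {i}" using i by auto
    then show ?thesis using True F[OF i i] G[OF i j] a b by (simp add: f_def)
  next
    case False
    then have i': "i - 1 \<in> {1..r}" "i - 1 \<noteq> i" using i by auto
    then have "{1..r} \<inter> {i - 1, i} = {i - 1, i}" using i by auto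
    then show ?thesis using False i' F[OF i i] F[OF i i'(1)] G[OF i j] G[OF i'(1) j] a b
      by (simp add: f_def add.commute)
  qed
  finally show "(\<Sum>t\<in>{1..r}. (F i t * G t j) $$ (a, b)) = K i j $$ (a, b)"
    unfolding f_def K[OF i j] .
qed

section \<open>Block LDU factorization of block tridiagonal matrices\<close>

(* Blocks of the factors of M = L D W produced by block Gaussian elimination with pivots P i:
   L = elim_lower and W = elim_upper are unit block bidiagonal, D = block_diag P, and
   pivot_lower is the product L D. *)
definition block_diag :: "(nat \<Rightarrow> nat) \<Rightarrow> (nat \<Rightarrow> 'a :: zero mat) \<Rightarrow> nat \<Rightarrow> nat \<Rightarrow> 'a mat" where
  "block_diag ns P i j = (if i = j then P i else 0\<^sub>m (ns i) (ns j))"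

definition elim_lower :: "(nat \<Rightarrow> nat) \<Rightarrow> complex mat \<Rightarrow> (nat \<Rightarrow> complex mat) \<Rightarrow> nat \<Rightarrow> nat \<Rightarrow> complex mat" where
  "elim_lower ns M P i j = (if i = j then 1\<^sub>m (ns i)
     else if i = Suc j then blk ns M i j * minv (P j) else 0\<^sub>m (ns i) (ns j))"

definition elim_upper :: "(nat \<Rightarrow> nat) \<Rightarrow> complex mat \<Rightarrow> (nat \<Rightarrow> complex mat) \<Rightarrow> nat \<Rightarrow> nat \<Rightarrow> complex mat" where
  "elim_upper ns M P i j = (if i = j then 1\<^sub>m (ns i)
     else if j = Suc i then minv (P i) * blk ns M i j else 0\<^sub>m (ns i) (ns j))"

definition pivot_lower :: "(nat \<Rightarrow> nat) \<Rightarrow> complex mat \<Rightarrow> (nat \<Rightarrow> complex mat) \<Rightarrow> nat \<Rightarrow> nat \<Rightarrow> complex mat" where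
  "pivot_lower ns M P i j = (if i = j then P i else if i = Suc j then blk ns M i j else 0\<^sub>m (ns i) (ns j))"

context
  fixes ns :: "nat \<Rightarrow> nat" and r :: nat and M :: "complex mat" and P :: "nat \<Rightarrow> complex mat"
  assumes P_carrier: "\<And>i. i \<in> {1..r} \<Longrightarrow> P i \<in> carrier_mat (ns i) (ns i)"
    and P_invertible: "\<And>i. i \<in> {1..<r} \<Longrightarrow> invertible_mat (P i)"
begin

lemma minv_pivot:
  assumes "i \<in> {1..<r}"
  shows "minv (P i) \<in> carrier_mat (ns i) (ns i)" "P i * minv (P i) = 1\<^sub>m (ns i)"
    "minv (P i) * P i = 1\<^sub>m (ns i)"
  using invertible_minv[OF P_invertible P_carrier] assms by auto

lemma elim_lower_carrier:
  "i \<in> {1..r} \<Longrightarrow> j \<in> {1..r} \<Longrightarrow> elim_lower ns M P i j \<in> carrier_mat (ns i) (ns j)"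
  using minv_pivot(1)[of j] by (auto simp: elim_lower_def)

lemma elim_upper_carrier:
  "i \<in> {1..r} \<Longrightarrow> j \<in> {1..r} \<Longrightarrow> elim_upper ns M P i j \<in> carrier_mat (ns i) (ns j)"
  using minv_pivot(1)[of i] by (auto simp: elim_upper_def)

lemma block_diag_carrier:
  "i \<in> {1..r} \<Longrightarrow> j \<in> {1..r} \<Longrightarrow> block_diag ns P i j \<in> carrier_mat (ns i) (ns j)"
  using P_carrier by (auto simp: block_diag_def)

lemma pivot_lower_carrier:
  "i \<in> {1..r} \<Longrightarrow> j \<in> {1..r} \<Longrightarrow> pivot_lower ns M P i j \<in> carrier_mat (ns i) (ns j)"
  using P_carrier by (auto simp: pivot_lower_def)

lemma elim_lower_mult_block_diag:
  "mat_of_blocks ns r (elim_lower ns M P) * mat_of_blocks ns r (block_diag ns P)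
     = mat_of_blocks ns r (pivot_lower ns M P)"
proof (rule mat_of_blocks_mult_lower_bidiagonal)
  show "elim_lower ns M P i t = 0\<^sub>m (ns i) (ns t)" if "t \<noteq> i" "Suc t \<noteq> i" for i t
    using that by (simp add: elim_lower_def)
  fix i j assume i: "i \<in> {1..r}" and j: "j \<in> {1..r}"
  have prev: "minv (P (i - 1)) \<in> carrier_mat (ns (i - 1)) (ns (i - 1))" if "i \<noteq> 1"
    using that i by (intro minv_pivot) auto
  consider "j = i" | "i = Suc j" | "j \<noteq> i" "i \<noteq> Suc j" by blast
  then show "elim_lower ns M P i i * block_diag ns P i j + (if i = 1 then 0\<^sub>m (ns i) (ns j)
      else elim_lower ns M P i (i - 1) * block_diag ns P (i - 1) j) = pivot_lower ns M P i j"
  proof cases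
    case 1
    then show ?thesis using P_carrier[OF i] prev i
      by (auto simp: elim_lower_def block_diag_def pivot_lower_def)
  next
    case 2
    then have "j \<in> {1..<r}" using i j by auto
    then have "blk ns M i j * minv (P j) * P j = blk ns M i j"
      using minv_pivot[of j] P_carrier[of j] by (simp add: assoc_mult_mat[of _ "ns i" "ns j"])
    then show ?thesis using 2 j by (auto simp: elim_lower_def block_diag_def pivot_lower_def)
  next
    case 3
    then show ?thesis using i prev by (auto simp: elim_lower_def block_diag_def pivot_lower_def)
  qed
qed (simp_all add: elim_lower_carrier block_diag_carrier)

lemma pivot_lower_elim_upper_diagonal:
  assumes i: "i \<in> {1..r}"
    and P_first: "P 1 = blk ns M 1 1"
    and P_next: "\<And>i. i \<in> {1..<r} \<Longrightarrow>
                   P (Suc i) = blk ns M (Suc i) (Suc i) - blk ns M (Suc i) i * minv (P i) * blk ns M i (Suc i)"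
  shows "pivot_lower ns M P i i * elim_upper ns M P i i + (if i = 1 then 0\<^sub>m (ns i) (ns i)
           else pivot_lower ns M P i (i - 1) * elim_upper ns M P (i - 1) i) = blk ns M i i"
proof (cases "i = 1")
  case True
  then show ?thesis using P_first P_carrier[OF i] by (simp add: pivot_lower_def elim_upper_def)
next
  case False
  then have i': "i - 1 \<in> {1..<r}" "Suc (i - 1) = i" using i by auto
  let ?X = "blk ns M i (i - 1) * minv (P (i - 1)) * blk ns M (i - 1) i"
  have "blk ns M i (i - 1) * (minv (P (i - 1)) * blk ns M (i - 1) i) = ?X"
    by (rule assoc_mult_mat[symmetric, OF blk_carrier[of ns M i "i - 1"] minv_pivot(1)[OF i'(1)]
          blk_carrier[of ns M "i - 1" i]])
  then have "pivot_lower ns M P i (i - 1) * elim_upper ns M P (i - 1) i = ?X"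
    using i'(2) by (simp add: pivot_lower_def elim_upper_def)
  moreover have "pivot_lower ns M P i i * elim_upper ns M P i i = P i"
    using P_carrier[OF i] by (simp add: pivot_lower_def elim_upper_def)
  moreover have "P i = blk ns M i i - ?X" using P_next[OF i'(1)] unfolding i'(2) .
  moreover have "?X \<in> carrier_mat (ns i) (ns i)" by (intro carrier_matI) simp_all
  ultimately show ?thesis using False by (intro eq_matI) simp_all
qed

lemma pivot_lower_mult_elim_upper:
  assumes M: "M \<in> carrier_mat (off ns (Suc r)) (off ns (Suc r))"
    and tridiagonal: "\<And>i j. i \<in> {1..r} \<Longrightarrow> j \<in> {1..r} \<Longrightarrow> i + 1 < j \<or> j + 1 < i \<Longrightarrow>
                        blk ns M i j = 0\<^sub>m (ns i) (ns j)"
    and P_first: "P 1 = blk ns M 1 1"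
    and P_next: "\<And>i. i \<in> {1..<r} \<Longrightarrow>
                   P (Suc i) = blk ns M (Suc i) (Suc i) - blk ns M (Suc i) i * minv (P i) * blk ns M i (Suc i)"
  shows "mat_of_blocks ns r (pivot_lower ns M P) * mat_of_blocks ns r (elim_upper ns M P) = M"
proof -
  have "mat_of_blocks ns r (pivot_lower ns M P) * mat_of_blocks ns r (elim_upper ns M P)
      = mat_of_blocks ns r (blk ns M)"
  proof (rule mat_of_blocks_mult_lower_bidiagonal)
    show "pivot_lower ns M P i t = 0\<^sub>m (ns i) (ns t)" if "t \<noteq> i" "Suc t \<noteq> i" for i t
      using that by (simp add: pivot_lower_def)
    fix i j assume i: "i \<in> {1..r}" and j: "j \<in> {1..r}"
    consider "j = i" | "j = Suc i" | "i = Suc j" | "i + 1 < j \<or> j + 1 < i" by linarith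
    then show "pivot_lower ns M P i i * elim_upper ns M P i j + (if i = 1 then 0\<^sub>m (ns i) (ns j)
        else pivot_lower ns M P i (i - 1) * elim_upper ns M P (i - 1) j) = blk ns M i j"
    proof cases
      case 1
      then show ?thesis using pivot_lower_elim_upper_diagonal[OF i P_first P_next] by (simp only:)
    next
      case 2
      then have i': "i \<in> {1..<r}" using i j by auto
      have "P i * (minv (P i) * blk ns M i j) = P i * minv (P i) * blk ns M i j"
        by (rule assoc_mult_mat[symmetric, OF P_carrier[OF i] minv_pivot(1)[OF i'] blk_carrier[of ns M i j]])
      then have "P i * (minv (P i) * blk ns M i j) = blk ns M i j"
        using minv_pivot(2)[OF i'] by simp
      moreover have "i \<noteq> 1 \<Longrightarrow> elim_upper ns M P (i - 1) j = 0\<^sub>m (ns (i - 1)) (ns j)"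
        using 2 i by (auto simp: elim_upper_def)
      ultimately show ?thesis using 2 i by (auto simp: pivot_lower_def elim_upper_def)
    next
      case 3
      then show ?thesis using P_carrier[OF i] j by (simp add: pivot_lower_def elim_upper_def)
    next
      case 4
      then have "elim_upper ns M P i j = 0\<^sub>m (ns i) (ns j)"
        and "i \<noteq> 1 \<Longrightarrow> elim_upper ns M P (i - 1) j = 0\<^sub>m (ns (i - 1)) (ns j)"
        by (auto simp: elim_upper_def)
      then show ?thesis using P_carrier[OF i] tridiagonal[OF i j 4] by (simp add: pivot_lower_def)
    qed
  qed (simp_all add: pivot_lower_carrier elim_upper_carrier)
  then show ?thesis using mat_of_blocks_blk[OF M] by simp
qed

lemma block_tridiagonal_LDU:
  assumes M: "M \<in> carrier_mat (off ns (Suc r)) (off ns (Suc r))"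
    and tridiagonal: "\<And>i j. i \<in> {1..r} \<Longrightarrow> j \<in> {1..r} \<Longrightarrow> i + 1 < j \<or> j + 1 < i \<Longrightarrow>
                        blk ns M i j = 0\<^sub>m (ns i) (ns j)"
    and P_first: "P 1 = blk ns M 1 1"
    and P_next: "\<And>i. i \<in> {1..<r} \<Longrightarrow>
                   P (Suc i) = blk ns M (Suc i) (Suc i) - blk ns M (Suc i) i * minv (P i) * blk ns M i (Suc i)"
  shows "\<exists>L D W. L \<in> carrier_mat (off ns (Suc r)) (off ns (Suc r))
        \<and> D \<in> carrier_mat (off ns (Suc r)) (off ns (Suc r))
        \<and> W \<in> carrier_mat (off ns (Suc r)) (off ns (Suc r))
        \<and> M = L * D * W
        \<and> (\<forall>i\<in>{1..r}. blk ns L i i = 1\<^sub>m (ns i) \<and> blk ns W i i = 1\<^sub>m (ns i))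
        \<and> (\<forall>i\<in>{1..r}. \<forall>j\<in>{1..r}. i < j \<longrightarrow>
             blk ns L i j = 0\<^sub>m (ns i) (ns j) \<and> blk ns W j i = 0\<^sub>m (ns j) (ns i))
        \<and> (\<forall>i\<in>{1..r}. \<forall>j\<in>{1..r}. i \<noteq> j \<longrightarrow> blk ns D i j = 0\<^sub>m (ns i) (ns j))
        \<and> (\<forall>i\<in>{1..r}. blk ns D i i = P i)"
proof -
  let ?L = "elim_lower ns M P" and ?D = "block_diag ns P" and ?W = "elim_upper ns M P"
  have blk_L: "blk ns (mat_of_blocks ns r ?L) i j = ?L i j"
    and blk_D: "blk ns (mat_of_blocks ns r ?D) i j = ?D i j"
    and blk_W: "blk ns (mat_of_blocks ns r ?W) i j = ?W i j" if "i \<in> {1..r}" "j \<in> {1..r}" for i j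
    using that by (simp_all add: blk_mat_of_blocks elim_lower_carrier block_diag_carrier elim_upper_carrier)
  have "M = mat_of_blocks ns r ?L * mat_of_blocks ns r ?D * mat_of_blocks ns r ?W"
    using elim_lower_mult_block_diag pivot_lower_mult_elim_upper[OF assms] by simp
  moreover have "\<forall>i\<in>{1..r}. blk ns (mat_of_blocks ns r ?L) i i = 1\<^sub>m (ns i)
      \<and> blk ns (mat_of_blocks ns r ?W) i i = 1\<^sub>m (ns i)"
    by (simp add: blk_L blk_W elim_lower_def elim_upper_def)
  moreover have "\<forall>i\<in>{1..r}. \<forall>j\<in>{1..r}. i < j \<longrightarrow> blk ns (mat_of_blocks ns r ?L) i j = 0\<^sub>m (ns i) (ns j)
      \<and> blk ns (mat_of_blocks ns r ?W) j i = 0\<^sub>m (ns j) (ns i)"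
    by (simp add: blk_L blk_W elim_lower_def elim_upper_def)
  moreover have "\<forall>i\<in>{1..r}. \<forall>j\<in>{1..r}. i \<noteq> j \<longrightarrow> blk ns (mat_of_blocks ns r ?D) i j = 0\<^sub>m (ns i) (ns j)"
    and "\<forall>i\<in>{1..r}. blk ns (mat_of_blocks ns r ?D) i i = P i"
    by (simp_all add: blk_D block_diag_def)
  ultimately show ?thesis
    by (intro exI[of _ "mat_of_blocks ns r ?L"] exI[of _ "mat_of_blocks ns r ?D"]
        exI[of _ "mat_of_blocks ns r ?W"] conjI mat_of_blocks_carrier) assumption+
qed

end

section \<open>Schur complements\<close>

lemma schur_pos_def:
  assumes ns_mono: "\<forall>i. 1 \<le> i \<and> i + 1 < r \<longrightarrow> ns (i+1) \<le> ns i"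
    and H11: "herm_pd (ns 1) (blk ns Ht 1 1)"
    and S_diag: "\<forall>i\<in>{1..r}. skew_hermitian (blk ns St i i)"
    and S_sub: "\<forall>i\<in>{2..<r}.
                  blk ns St i (i - 1) = - adj (blk ns St (i - 1) i)
                  \<and> (\<exists>Sig \<in> carrier_mat (ns i) (ns i). invertible_mat Sig \<and>
                       blk ns St i (i - 1) =
                         mat (ns i) (ns (i - 1)) (\<lambda>(a, b). if b < ns i then Sig $$ (a, b) else 0))"
    and "k + 2 \<le> r"
  shows "pos_def (ns (k + 1)) (schur ns Ht St k)"
  using \<open>k + 2 \<le> r\<close>
proof (induction k)
  case 0
  then show ?case
    using pos_def_add_skew_hermitian[OF herm_pd_imp_pos_def[OF H11]] S_diag by simp
next
  case (Suc k)
  define B where "B = blk ns St (k + 2) (k + 1)"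
  define Y where "Y = minv (schur ns Ht St k)"
  have "k + 2 \<in> {2..<r}" "k + 2 - 1 = k + 1" using Suc by auto
  with S_sub obtain Sig where Sig: "Sig \<in> carrier_mat (ns (k + 2)) (ns (k + 2))" "invertible_mat Sig"
    and B_pad: "B = mat (ns (k + 2)) (ns (k + 1))
                      (\<lambda>(a, b). if b < ns (k + 2) then Sig $$ (a, b) else 0)"
    and B_adj: "B = - adj (blk ns St (k + 1) (k + 2))"
    unfolding B_def by fastforce
  have Y: "pos_def (ns (k + 1)) Y" unfolding Y_def using Suc by (simp add: pos_def_minv)
  then have Y_carrier: "Y \<in> carrier_mat (ns (k + 1)) (ns (k + 1))" unfolding pos_def_def by simp
  have "ns (k + 2) \<le> ns (k + 1)" using ns_mono Suc by auto
  then have "pos_def (ns (k + 2)) (B * Y * adj B)"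
    using padded_adj_kernel[OF Sig(2,1)] by (intro pos_def_congruence[OF Y]) (auto simp: B_pad)
  moreover have "schur ns Ht St (Suc k) = B * Y * adj B + blk ns St (k + 2) (k + 2)"
  proof -
    have "blk ns St (k + 1) (k + 2) = - adj B" using B_adj by (simp add: adj_uminus)
    moreover have "B * Y * (- adj B) = - (B * Y * adj B)"
      using Y_carrier by (intro uminus_mult_right_mat) (auto simp: B_def)
    ultimately show ?thesis
      using Y_carrier by (intro eq_matI) (auto simp: B_def Y_def)
  qed
  ultimately show ?case using S_diag Suc by (simp add: pos_def_add_skew_hermitian)
qed

lemma schur_complement_LDU:
  fixes Ht St :: "complex mat"
  assumes Ht: "Ht \<in> carrier_mat (off ns (Suc r)) (off ns (Suc r))"
    and St: "St \<in> carrier_mat (off ns (Suc r)) (off ns (Suc r))"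
    and r: "2 \<le> r"
    and Hblk: "\<forall>i\<in>{1..r}. \<forall>j\<in>{1..r}. (i, j) \<noteq> (1, 1) \<longrightarrow> blk ns Ht i j = 0\<^sub>m (ns i) (ns j)"
    and S_band: "\<forall>i\<in>{1..r}. \<forall>j\<in>{1..r}. (i + 1 < j \<or> j + 1 < i) \<longrightarrow>
                  blk ns St i j = 0\<^sub>m (ns i) (ns j)"
    and S_last: "\<forall>i\<in>{1..<r}. blk ns St i r = 0\<^sub>m (ns i) (ns r) \<and> blk ns St r i = 0\<^sub>m (ns r) (ns i)"
    and pd: "\<And>k. k + 2 \<le> r \<Longrightarrow> pos_def (ns (k + 1)) (schur ns Ht St k)"
  shows "\<exists>L D W. L \<in> carrier_mat (off ns (Suc r)) (off ns (Suc r))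
        \<and> D \<in> carrier_mat (off ns (Suc r)) (off ns (Suc r))
        \<and> W \<in> carrier_mat (off ns (Suc r)) (off ns (Suc r))
        \<and> Ht + St = L * D * W
        \<and> (\<forall>i\<in>{1..r}. blk ns L i i = 1\<^sub>m (ns i) \<and> blk ns W i i = 1\<^sub>m (ns i))
        \<and> (\<forall>i\<in>{1..r}. \<forall>j\<in>{1..r}. i < j \<longrightarrow>
             blk ns L i j = 0\<^sub>m (ns i) (ns j) \<and> blk ns W j i = 0\<^sub>m (ns j) (ns i))
        \<and> (\<forall>i\<in>{1..r}. \<forall>j\<in>{1..r}. i \<noteq> j \<longrightarrow> blk ns D i j = 0\<^sub>m (ns i) (ns j))
        \<and> (\<forall>i\<in>{1..<r}. blk ns D i i = schur ns Ht St (i - 1))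
        \<and> blk ns D r r = blk ns St r r"
proof -
  define P where "P i = (if i < r then schur ns Ht St (i - 1) else blk ns St r r)" for i
  have blk_M: "blk ns (Ht + St) i j = blk ns St i j"
    if "i \<in> {1..r}" "j \<in> {1..r}" "(i, j) \<noteq> (1, 1)" for i j
    using blk_add[OF Ht St that(1,2)] Hblk that by simp
  have pd': "pos_def (ns i) (schur ns Ht St (i - 1))" if "i \<in> {1..<r}" for i
    using pd[of "i - 1"] that by simp
  have P_carrier: "P i \<in> carrier_mat (ns i) (ns i)" if "i \<in> {1..r}" for i
    using pd' that unfolding P_def pos_def_def by auto
  have P_invertible: "invertible_mat (P i)" if "i \<in> {1..<r}" for i
    using pd'[OF that] that pos_def_invertible unfolding P_def by auto
  have P_first: "P 1 = blk ns (Ht + St) 1 1"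
    using r blk_add[OF Ht St] by (simp add: P_def)
  have P_next: "P (Suc i) = blk ns (Ht + St) (Suc i) (Suc i)
      - blk ns (Ht + St) (Suc i) i * minv (P i) * blk ns (Ht + St) i (Suc i)"
    if i: "i \<in> {1..<r}" for i
  proof (cases "Suc i < r")
    case True
    have "i - 1 + 2 = Suc i" "i - 1 + 1 = i" "Suc (i - 1) = i" using i by auto
    then have "schur ns Ht St i = blk ns St (Suc i) (Suc i)
        - blk ns St (Suc i) i * minv (schur ns Ht St (i - 1)) * blk ns St i (Suc i)"
      using schur.simps(2)[of ns Ht St "i - 1"] by simp
    then show ?thesis using True i blk_M by (simp add: P_def)
  next
    case False
    then have "Suc i = r" using i by auto
    moreover have "minv (P i) \<in> carrier_mat (ns i) (ns i)"
      using invertible_minv(1)[OF P_invertible P_carrier] i by auto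
    moreover have "blk ns St r r - 0\<^sub>m (ns r) (ns r) = blk ns St r r" by (intro eq_matI) auto
    ultimately show ?thesis using i S_last blk_M by (simp add: P_def)
  qed
  have tridiagonal: "blk ns (Ht + St) i j = 0\<^sub>m (ns i) (ns j)"
    if "i \<in> {1..r}" "j \<in> {1..r}" "i + 1 < j \<or> j + 1 < i" for i j
    using that S_band blk_M by auto
  have D_blocks: "(\<forall>i\<in>{1..r}. blk ns D i i = P i) \<longleftrightarrow>
      (\<forall>i\<in>{1..<r}. blk ns D i i = schur ns Ht St (i - 1)) \<and> blk ns D r r = blk ns St r r" for D
    using r by (auto simp: P_def)
  have "Ht + St \<in> carrier_mat (off ns (Suc r)) (off ns (Suc r))" using Ht St by simp
  from block_tridiagonal_LDU[OF P_carrier P_invertible this tridiagonal P_first P_next]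
  show ?thesis unfolding D_blocks .
qed

theorem lemma4p2:
  fixes n r :: nat and ns :: "nat \<Rightarrow> nat" and A H S U :: "complex mat"
  assumes HS: "H \<in> carrier_mat n n" "S \<in> carrier_mat n n" "A = H + S"
    and H_herm: "hermitian H" and H_nz: "H \<noteq> 0\<^sub>m n n" and H_psd: "pos_semidef n H"
    and S_skew: "skew_hermitian S" and S_nz: "S \<noteq> 0\<^sub>m n n"
    and U: "unitary n U"
    and r: "r \<ge> 2"
    and ns_mono: "\<forall>i. 1 \<le> i \<and> i + 1 < r \<longrightarrow> ns (i+1) \<le> ns i"
    and ns_pos: "\<forall>i. 1 \<le> i \<and> i < r \<longrightarrow> 0 < ns i"
    and ns_sum: "(\<Sum>i\<in>{1..r}. ns i) = n"
    and Hblk: "\<forall>i\<in>{1..r}. \<forall>j\<in>{1..r}. (i, j) \<noteq> (1, 1) \<longrightarrow>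
                  blk ns (adj U * H * U) i j = 0\<^sub>m (ns i) (ns j)"
    and H11: "herm_pd (ns 1) (blk ns (adj U * H * U) 1 1)"
    and S_band: "\<forall>i\<in>{1..r}. \<forall>j\<in>{1..r}. (i + 1 < j \<or> j + 1 < i) \<longrightarrow>
                  blk ns (adj U * S * U) i j = 0\<^sub>m (ns i) (ns j)"
    and S_last: "\<forall>i\<in>{1..<r}. blk ns (adj U * S * U) i r = 0\<^sub>m (ns i) (ns r)
                  \<and> blk ns (adj U * S * U) r i = 0\<^sub>m (ns r) (ns i)"
    and S_diag: "\<forall>i\<in>{1..r}. skew_hermitian (blk ns (adj U * S * U) i i)"
    and S_sub: "\<forall>i\<in>{2..<r}.
                  blk ns (adj U * S * U) i (i - 1) = - adj (blk ns (adj U * S * U) (i - 1) i)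
                  \<and> (\<exists>Sig \<in> carrier_mat (ns i) (ns i). invertible_mat Sig \<and>
                       blk ns (adj U * S * U) i (i - 1) =
                         mat (ns i) (ns (i - 1)) (\<lambda>(a, b). if b < ns i then Sig $$ (a, b) else 0))"
  shows "(\<forall>k. k + 2 < r \<longrightarrow> invertible_mat (schur ns (adj U * H * U) (adj U * S * U) k))
    \<and> (\<forall>k. k + 2 \<le> r \<longrightarrow> pos_def (ns (k + 1)) (schur ns (adj U * H * U) (adj U * S * U) k))
    \<and> (\<exists>L D W. L \<in> carrier_mat n n \<and> D \<in> carrier_mat n n \<and> W \<in> carrier_mat n n
        \<and> adj U * A * U = L * D * W
        \<and> (\<forall>i\<in>{1..r}. blk ns L i i = 1\<^sub>m (ns i) \<and> blk ns W i i = 1\<^sub>m (ns i))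
        \<and> (\<forall>i\<in>{1..r}. \<forall>j\<in>{1..r}. i < j \<longrightarrow>
             blk ns L i j = 0\<^sub>m (ns i) (ns j) \<and> blk ns W j i = 0\<^sub>m (ns j) (ns i))
        \<and> (\<forall>i\<in>{1..r}. \<forall>j\<in>{1..r}. i \<noteq> j \<longrightarrow> blk ns D i j = 0\<^sub>m (ns i) (ns j))
        \<and> (\<forall>i\<in>{1..<r}. blk ns D i i = schur ns (adj U * H * U) (adj U * S * U) (i - 1))
        \<and> blk ns D r r = blk ns (adj U * S * U) r r)"
proof -
  (* Only the block structure of U^* H U and U^* S U enters. *)
  let ?Ht = "adj U * H * U" and ?St = "adj U * S * U"
  have n: "off ns (Suc r) = n"
    using ns_sum by (simp add: off_def atLeastLessThanSuc_atLeastAtMost)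
  have U_carrier: "U \<in> carrier_mat n n" using U unfolding unitary_def by simp
  then have Ht: "?Ht \<in> carrier_mat (off ns (Suc r)) (off ns (Suc r))"
    and St: "?St \<in> carrier_mat (off ns (Suc r)) (off ns (Suc r))"
    using HS unfolding n by auto
  have "adj U * A * U = (adj U * H + adj U * S) * U"
    using U_carrier HS by (simp add: mult_add_distrib_mat[of _ n n])
  also have "\<dots> = ?Ht + ?St"
    using U_carrier HS by (intro add_mult_distrib_mat[of _ n n]) auto
  finally have UAU: "adj U * A * U = ?Ht + ?St" .
  have pd: "\<And>k. k + 2 \<le> r \<Longrightarrow> pos_def (ns (k + 1)) (schur ns ?Ht ?St k)"
    by (rule schur_pos_def[OF ns_mono H11 S_diag S_sub])
  have "\<forall>k. k + 2 < r \<longrightarrow> invertible_mat (schur ns ?Ht ?St k)"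
    using pd pos_def_invertible less_imp_le by blast
  with pd schur_complement_LDU[OF Ht St r Hblk S_band S_last pd] show ?thesis
    unfolding n UAU by blast
qed

end
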